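(* Let $G$ be a finite simple graph with a perfect matching $M$ and let $\mathcal{C}$ be an optimal edge $2$-colouring of $G$; write $\mathrm{mcl}(u)$ for the colour of the edge of $M$ at vertex $u$. Let $F$ be a forest of rooted trees which is a subgraph of $G\setminus M$, with set of roots $R$ and set of leaves $L$, each tree equipped with a depth-first ordering, and let $\preceq$ be the induced partial order on $V(F)$ (see context). Suppose that for each $u\in R\cup L$, every edge of $F$ incident with $u$ has colour $\mathrm{mcl}(u)$. Then there exists a set $P=\{(u_i,v_i): i=1,\ldots,|L|\}$ of pairs of vertices of $F$ satisfying: (a) for $i\ne j$, $u_i\ne u_j$; (b) $u_i\prec v_i$ for all $1\le i\le |L|$; in particular the path $u_iFv_i$ exists; (c) $\mathrm{mcl}(u_i)=\mathrm{mcl}(v_i)$ for all $i$; (d) the path $u_iFv_i$ is monochromatic with all edges coloured $\mathrm{mcl}(u_i)$, for all $i$; (e) for every internal vertex $z$ of $u_iFv_i$, $\mathrm{mcl}(z)\ne\mathrm{mcl}(u_i)$, for all $i$; (f) for $i\ne j$ with $u_iv_i\in M$ and $u_jv_j\in M$, the paths $u_iFv_i$ and $u_jFv_j$ do not share an internal vertex.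
   Context: $G\setminus M$ is the spanning subgraph of $G$ with edge set $E(G)\setminus M$. An edge $2$-colouring assigns colours to edges (not necessarily properly) so that every vertex sees at most $2$ distinct colours on its incident edges; optimal means it uses the maximum number of colours. In a rooted tree, leaves are the non-root vertices with no children; $R$ and $L$ are the unions over the trees of $F$ of their roots and leaves. For a rooted tree $T$ with a depth-first indexing $\mathrm{dfs}_T$ (descendants receive larger indices than their ancestors), the order $\preceq_T$ is $u\preceq_T v$ iff $\mathrm{dfs}_T(u)\ge \mathrm{dfs}_T(v)$. The partial order $\preceq$ on $V(F)$ restricts to $\preceq_T$ on each component tree $T$, and vertices in different trees are incomparable; $u\prec v$ means $u\preceq v$, $u\ne v$. $xFy$ denotes the unique $x$–$y$ path in $F$ (when $x,y$ lie in the same tree); its internal vertices are those other than $x,y$. *)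

theory Defs
  imports Main
begin

definition simple_graph :: "'a set \<Rightarrow> 'a set set \<Rightarrow> bool" where
  "simple_graph V E \<longleftrightarrow> finite V \<and> E \<subseteq> {{x, y} | x y. x \<in> V \<and> y \<in> V \<and> x \<noteq> y}"

definition perfect_matching :: "'a set \<Rightarrow> 'a set set \<Rightarrow> 'a set set \<Rightarrow> bool" where
  "perfect_matching V E M \<longleftrightarrow> M \<subseteq> E \<and> (\<forall>v\<in>V. \<exists>!e. e \<in> M \<and> v \<in> e)"

text \<open>Edge 2-colouring: every vertex sees at most 2 distinct colours on incident edges.
  Colours are natural numbers (no loss of generality: a finite graph uses finitely many colours).\<close>
definition edge_2_colouring :: "'a set \<Rightarrow> 'a set set \<Rightarrow> ('a set \<Rightarrow> nat) \<Rightarrow> bool" where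
  "edge_2_colouring V E c \<longleftrightarrow> (\<forall>v\<in>V. card (c ` {e \<in> E. v \<in> e}) \<le> 2)"

definition optimal_edge_2_colouring :: "'a set \<Rightarrow> 'a set set \<Rightarrow> ('a set \<Rightarrow> nat) \<Rightarrow> bool" where
  "optimal_edge_2_colouring V E c \<longleftrightarrow> edge_2_colouring V E c \<and>
     (\<forall>c'. edge_2_colouring V E c' \<longrightarrow> card (c' ` E) \<le> card (c ` E))"

definition mcl :: "'a set set \<Rightarrow> ('a set \<Rightarrow> nat) \<Rightarrow> 'a \<Rightarrow> nat" where
  "mcl M c u = c (THE e. e \<in> M \<and> u \<in> e)"

text \<open>The forest F has vertex set VF; par v = None means v is a root, par v = Some p means
  p is the parent of v.\<close>
definition parent_rel :: "'a set \<Rightarrow> ('a \<Rightarrow> 'a option) \<Rightarrow> ('a \<times> 'a) set" where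
  "parent_rel VF par = {(v, p). v \<in> VF \<and> par v = Some p}"

definition rooted_forest :: "'a set \<Rightarrow> ('a \<Rightarrow> 'a option) \<Rightarrow> bool" where
  "rooted_forest VF par \<longleftrightarrow> finite VF \<and>
     (\<forall>v\<in>VF. \<forall>p. par v = Some p \<longrightarrow> p \<in> VF) \<and> acyclic (parent_rel VF par)"

definition forest_edges :: "'a set \<Rightarrow> ('a \<Rightarrow> 'a option) \<Rightarrow> 'a set set" where
  "forest_edges VF par = {{v, p} | v p. v \<in> VF \<and> par v = Some p}"

definition roots :: "'a set \<Rightarrow> ('a \<Rightarrow> 'a option) \<Rightarrow> 'a set" where
  "roots VF par = {v \<in> VF. par v = None}"

definition leaves :: "'a set \<Rightarrow> ('a \<Rightarrow> 'a option) \<Rightarrow> 'a set" where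
  "leaves VF par = {v \<in> VF. par v \<noteq> None \<and> \<not> (\<exists>w\<in>VF. par w = Some v)}"

definition anc :: "'a set \<Rightarrow> ('a \<Rightarrow> 'a option) \<Rightarrow> 'a \<Rightarrow> 'a \<Rightarrow> bool" where
  "anc VF par u v \<longleftrightarrow> (v, u) \<in> (parent_rel VF par)\<^sup>*"

definition same_tree :: "'a set \<Rightarrow> ('a \<Rightarrow> 'a option) \<Rightarrow> 'a \<Rightarrow> 'a \<Rightarrow> bool" where
  "same_tree VF par x y \<longleftrightarrow> (\<exists>r\<in>VF. anc VF par r x \<and> anc VF par r y)"

text \<open>A depth-first (preorder) indexing of each tree: injective on each tree, ancestors get
  smaller indices than their proper descendants, and the descendants of every vertex form a
  contiguous block of indices starting at that vertex.\<close>
definition dfs_indexing :: "'a set \<Rightarrow> ('a \<Rightarrow> 'a option) \<Rightarrow> ('a \<Rightarrow> nat) \<Rightarrow> bool" where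
  "dfs_indexing VF par dfs \<longleftrightarrow>
     (\<forall>x\<in>VF. \<forall>y\<in>VF. same_tree VF par x y \<and> dfs x = dfs y \<longrightarrow> x = y) \<and>
     (\<forall>u\<in>VF. \<forall>v\<in>VF. anc VF par u v \<and> u \<noteq> v \<longrightarrow> dfs u < dfs v) \<and>
     (\<forall>u\<in>VF. \<forall>v\<in>VF. \<forall>w\<in>VF. anc VF par u v \<and> same_tree VF par u w \<and>
         dfs u < dfs w \<and> dfs w < dfs v \<longrightarrow> anc VF par u w)"

definition forest_le :: "'a set \<Rightarrow> ('a \<Rightarrow> 'a option) \<Rightarrow> ('a \<Rightarrow> nat) \<Rightarrow> 'a \<Rightarrow> 'a \<Rightarrow> bool" where
  "forest_le VF par dfs u v \<longleftrightarrow> u \<in> VF \<and> v \<in> VF \<and> same_tree VF par u v \<and> dfs u \<ge> dfs v"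

definition forest_less :: "'a set \<Rightarrow> ('a \<Rightarrow> 'a option) \<Rightarrow> ('a \<Rightarrow> nat) \<Rightarrow> 'a \<Rightarrow> 'a \<Rightarrow> bool" where
  "forest_less VF par dfs u v \<longleftrightarrow> forest_le VF par dfs u v \<and> u \<noteq> v"

text \<open>xs is a path from x to y in F (list of distinct vertices, consecutive ones adjacent in F).
  In a forest such a path is unique when it exists.\<close>
definition forest_path :: "'a set \<Rightarrow> ('a \<Rightarrow> 'a option) \<Rightarrow> 'a list \<Rightarrow> 'a \<Rightarrow> 'a \<Rightarrow> bool" where
  "forest_path VF par xs x y \<longleftrightarrow> xs \<noteq> [] \<and> hd xs = x \<and> last xs = y \<and> distinct xs \<and>
     (\<forall>i. Suc i < length xs \<longrightarrow> {xs ! i, xs ! Suc i} \<in> forest_edges VF par)"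

definition path_edges :: "'a list \<Rightarrow> 'a set set" where
  "path_edges xs = {{xs ! i, xs ! Suc i} | i. Suc i < length xs}"

definition path_internal :: "'a list \<Rightarrow> 'a set" where
  "path_internal xs = set xs - {hd xs, last xs}"

end

theory Submission
  imports Defs
begin

(*
  Call a non-root vertex x up-matched if the edge to its parent has colour alpha = mcl x.
  From x climb towards the root along parent edges of colour alpha, passing only through
  vertices whose matching colour differs from alpha, and let a be the vertex where the climb
  stops. If mcl a = alpha, the partner of x is a. Otherwise a sees the colours alpha and mcl a;
  as the climb could not continue, the parent edge of a (which exists by the hypothesis on
  roots) has colour mcl a, so a is up-matched itself. The partner of x is then the dfs-first
  vertex y whose climb of the same colour stalls at a, joined to x through a.

  Only that dfs-first vertex can be its own partner, and it relays to a. Leaves are up-matched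
  and never the top of a climb, so following relays from the leaves ends injectively in vertices
  with a proper partner: this gives |L| pairs. An internal vertex z of a path sees the climbing
  colour, which differs from mcl z; by the 2-colouring z determines that colour and hence the
  climb through z. Two pairs that are matching edges and share z thus share their second vertex,
  and coincide.
*)

lemma path_edges_subset_iff:
  "path_edges xs \<subseteq> S \<longleftrightarrow> successively (\<lambda>a b. {a, b} \<in> S) xs"
  unfolding path_edges_def successively_conv_nth by blast

lemma forest_path_iff:
  "forest_path VF par xs x y \<longleftrightarrow>
     xs \<noteq> [] \<and> hd xs = x \<and> last xs = y \<and> distinct xs \<and> path_edges xs \<subseteq> forest_edges VF par"
  unfolding forest_path_def path_edges_def by blast

lemma path_internal_in_path_edge:
  assumes "z \<in> path_internal xs"
  obtains e where "e \<in> path_edges xs" "z \<in> e"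
proof -
  from assms have "z \<in> set xs" "z \<noteq> hd xs" by (auto simp: path_internal_def)
  then obtain k where k: "k < length xs" "xs ! k = z" "k \<noteq> 0"
    by (metis hd_conv_nth in_set_conv_nth list.size(3) not_less0)
  then have "{xs ! (k - 1), xs ! k} \<in> path_edges xs"
    unfolding path_edges_def by (intro CollectI exI[of _ "k - 1"]) auto
  with k that show ?thesis by blast
qed

lemma successively_join_at_last:
  assumes xs: "xs \<noteq> []" "distinct xs" "successively R xs"
    and ys: "ys \<noteq> []" "distinct ys" "successively R ys"
    and last: "last xs = last ys" and R_sym: "\<And>a b. R a b \<Longrightarrow> R b a"
  obtains zs where "zs \<noteq> []" "hd zs = hd xs" "last zs = hd ys" "distinct zs"
    "successively R zs" "set zs \<subseteq> set xs \<union> set ys"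
proof -
  have "\<exists>w\<in>set xs. w \<in> set ys"
    using last_in_set[OF xs(1)] last_in_set[OF ys(1)] last by auto
  then obtain xs1 w xs2
    where xs_split: "xs = xs1 @ w # xs2" "w \<in> set ys" "\<forall>a\<in>set xs1. a \<notin> set ys"
    using split_list_first_prop[of xs "\<lambda>w. w \<in> set ys"] by blast
  obtain ys1 ys2 where ys_split: "ys = ys1 @ w # ys2"
    using split_list[OF xs_split(2)] by blast
  have "successively R (xs1 @ [w])"
    using xs(3) xs_split(1) successively_append_iff[of R "xs1 @ [w]" xs2] by simp
  moreover have "successively R (ys1 @ [w])"
    using ys(3) ys_split successively_append_iff[of R "ys1 @ [w]" ys2] by simp
  then have "successively R (rev (ys1 @ [w]))"
    unfolding successively_rev by (rule successively_mono) (rule R_sym)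
  ultimately have "successively R (xs1 @ w # rev ys1)"
    by (auto simp: successively_append_iff)
  moreover have "distinct (xs1 @ w # rev ys1)"
    using xs(2) ys(2) xs_split ys_split by auto
  moreover have "hd (xs1 @ w # rev ys1) = hd xs" "last (xs1 @ w # rev ys1) = hd ys"
    using xs_split(1) ys_split by (cases xs1; cases ys1; simp)+
  moreover have "set (xs1 @ w # rev ys1) \<subseteq> set xs \<union> set ys"
    using xs_split(1) ys_split by auto
  ultimately show ?thesis by (intro that) auto
qed

lemma rtrancl_imp_successively:
  assumes "(a, b) \<in> r\<^sup>*"
  shows "\<exists>xs. xs \<noteq> [] \<and> hd xs = a \<and> last xs = b \<and> successively (\<lambda>x y. (x, y) \<in> r) xs \<and>
    (\<forall>z\<in>set xs. (z, b) \<in> r\<^sup>*)"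
  using assms
proof (induction rule: converse_rtrancl_induct)
  case base
  show ?case by (intro exI[of _ "[b]"]) simp
next
  case (step a a')
  then obtain xs where "xs \<noteq> []" "hd xs = a'" "last xs = b" "successively (\<lambda>x y. (x, y) \<in> r) xs"
      "\<forall>z\<in>set xs. (z, b) \<in> r\<^sup>*" by blast
  with step.hyps show ?case
    by (intro exI[of _ "a # xs"]) (auto simp: successively_Cons intro: converse_rtrancl_into_rtrancl)
qed

lemma successively_trancl:
  "successively (\<lambda>x y. (x, y) \<in> r) (x # xs) \<Longrightarrow> z \<in> set xs \<Longrightarrow> (x, z) \<in> r\<^sup>+"
  by (induction xs arbitrary: x) (auto simp: successively_Cons intro: trancl_into_trancl2)

lemma distinct_if_successively_acyclic:
  "successively (\<lambda>x y. (x, y) \<in> r) xs \<Longrightarrow> acyclic r \<Longrightarrow> distinct xs"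
proof (induction xs)
  case (Cons x xs)
  have "x \<notin> set xs"
    using successively_trancl[OF Cons.prems(1)] Cons.prems(2) by (auto simp: acyclic_def)
  with Cons show ?case by (auto simp: successively_Cons)
qed simp

lemma single_valued_terminal_unique:
  assumes "single_valued r" "(z, a) \<in> r\<^sup>*" "(z, b) \<in> r\<^sup>*" "a \<notin> Domain r" "b \<notin> Domain r"
  shows "a = b"
  using single_valued_confluent[OF assms(1-3)] assms(4,5) by (auto elim: converse_rtranclE)

lemma wf_converse_ex_terminal:
  assumes "wf (r\<inverse>)" shows "\<exists>a. (z, a) \<in> r\<^sup>* \<and> a \<notin> Domain r"
proof -
  obtain a where "(z, a) \<in> r\<^sup>*" "\<And>y. (y, a) \<in> r\<inverse> \<Longrightarrow> y \<notin> {a. (z, a) \<in> r\<^sup>*}"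
    using wfE_min[OF assms, of z "{a. (z, a) \<in> r\<^sup>*}"] by blast
  then show ?thesis by (auto intro: rtrancl_into_rtrancl)
qed

lemma card_le_two_eq:
  assumes "finite S" "card S \<le> 2" "{a, b, d} \<subseteq> S" "b \<noteq> a" "d \<noteq> a"
  shows "b = d"
proof (rule ccontr)
  assume "b \<noteq> d"
  with assms(4,5) have "card {a, b, d} = 3" by auto
  with card_mono[OF assms(1,3)] assms(2) show False by linarith
qed

locale matched_2_coloured_graph =
  fixes V :: "'a set" and E M :: "'a set set" and c :: "'a set \<Rightarrow> nat"
  assumes simple: "simple_graph V E"
    and matching: "perfect_matching V E M"
    and colouring: "edge_2_colouring V E c"
begin

lemma finite_edges: "finite E"
proof -
  from simple have "finite V" "E \<subseteq> Pow V" unfolding simple_graph_def by auto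
  then show ?thesis by (meson finite_Pow_iff finite_subset)
qed

lemma edge_vertex: "e \<in> E \<Longrightarrow> z \<in> e \<Longrightarrow> z \<in> V"
  using simple unfolding simple_graph_def by auto

lemma mcl_edge:
  assumes "z \<in> V" shows "\<exists>e\<in>E. z \<in> e \<and> c e = mcl M c z"
proof -
  from matching assms have "\<exists>!e. e \<in> M \<and> z \<in> e" unfolding perfect_matching_def by blast
  then have "(THE e. e \<in> M \<and> z \<in> e) \<in> M \<and> z \<in> (THE e. e \<in> M \<and> z \<in> e)" by (rule theI')
  with matching show ?thesis unfolding mcl_def perfect_matching_def by blast
qed

lemma matching_mate_unique:
  assumes "w \<in> V" "{x, w} \<in> M" "{y, w} \<in> M" shows "x = y"
proof -
  from matching assms(1) have "\<exists>!e. e \<in> M \<and> w \<in> e" unfolding perfect_matching_def by blast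
  with assms(2,3) have "{x, w} = {y, w}" by blast
  then show ?thesis by (auto simp: doubleton_eq_iff)
qed

lemma non_matching_colours_eq:
  assumes "z \<in> V" "e1 \<in> E" "e2 \<in> E" "z \<in> e1" "z \<in> e2"
    and "c e1 \<noteq> mcl M c z" "c e2 \<noteq> mcl M c z"
  shows "c e1 = c e2"
proof -
  obtain e0 where e0: "e0 \<in> E" "z \<in> e0" "c e0 = mcl M c z" using mcl_edge[OF assms(1)] by blast
  let ?S = "c ` {e \<in> E. z \<in> e}"
  have "{c e0, c e1, c e2} \<subseteq> ?S" using e0(1,2) assms(2-5) by simp
  moreover have "card ?S \<le> 2" using colouring assms(1) unfolding edge_2_colouring_def by blast
  moreover have "finite ?S" using finite_edges by simp
  ultimately show ?thesis using card_le_two_eq e0(3) assms(6,7) by metis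
qed

end

locale coloured_forest = matched_2_coloured_graph +
  fixes VF :: "'a set" and par :: "'a \<Rightarrow> 'a option" and dfs :: "'a \<Rightarrow> nat"
  assumes forest: "rooted_forest VF par"
    and forest_vertices: "VF \<subseteq> V" and forest_subgraph: "forest_edges VF par \<subseteq> E"
    and dfs_order: "dfs_indexing VF par dfs"
    and ends_matched: "\<forall>u \<in> roots VF par \<union> leaves VF par. \<forall>e \<in> forest_edges VF par.
               u \<in> e \<longrightarrow> c e = mcl M c u"
begin

abbreviation parent :: "('a \<times> 'a) set" where
  "parent \<equiv> parent_rel VF par"

lemma parentD: "(w, p) \<in> parent \<Longrightarrow> w \<in> VF \<and> p \<in> VF \<and> par w = Some p"
  using forest unfolding parent_rel_def rooted_forest_def by auto

lemma finite_parent: "finite parent"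
proof -
  have "parent \<subseteq> VF \<times> VF" using parentD by auto
  with forest show ?thesis unfolding rooted_forest_def by (auto intro: finite_subset)
qed

lemma acyclic_parent: "acyclic parent"
  using forest unfolding rooted_forest_def by blast

lemma parent_forest_edge: "(w, p) \<in> parent \<Longrightarrow> {w, p} \<in> forest_edges VF par"
  unfolding parent_rel_def forest_edges_def by auto

lemma forest_edge_vertex: "e \<in> forest_edges VF par \<Longrightarrow> z \<in> e \<Longrightarrow> z \<in> V"
  using forest_subgraph edge_vertex by blast

lemma end_edge_colour:
  "u \<in> roots VF par \<union> leaves VF par \<Longrightarrow> e \<in> forest_edges VF par \<Longrightarrow> u \<in> e \<Longrightarrow> c e = mcl M c u"
  using ends_matched by blast

definition up_colour :: "'a \<Rightarrow> nat" where
  "up_colour w = c {w, the (par w)}"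

definition up_matched :: "'a set" where
  "up_matched = {x \<in> VF. par x \<noteq> None \<and> mcl M c x = up_colour x}"

definition climb :: "nat \<Rightarrow> ('a \<times> 'a) set" where
  "climb \<alpha> = {(w, p) \<in> parent. c {w, p} = \<alpha> \<and> mcl M c w \<noteq> \<alpha>}"

definition climb_top :: "'a \<Rightarrow> 'a" where
  "climb_top x =
     (THE a. (the (par x), a) \<in> (climb (up_colour x))\<^sup>* \<and> a \<notin> Domain (climb (up_colour x)))"

definition stalled :: "'a \<Rightarrow> 'a set" where
  "stalled a = {y \<in> up_matched. climb_top y = a \<and> mcl M c a \<noteq> up_colour y}"

definition partner :: "'a \<Rightarrow> 'a" where
  "partner x = (if mcl M c (climb_top x) = up_colour x then climb_top x
                else arg_min_on dfs (stalled (climb_top x)))"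

definition starts :: "'a set" where
  "starts = {x \<in> up_matched. partner x \<noteq> x}"

definition relay :: "('a \<times> 'a) set" where
  "relay = {(x, climb_top x) | x. x \<in> up_matched \<and> partner x = x}"

lemma up_matchedE:
  assumes "x \<in> up_matched"
  obtains p where "par x = Some p" "(x, p) \<in> parent" "c {x, p} = mcl M c x"
  using assms unfolding up_matched_def up_colour_def parent_rel_def by auto

lemma climb_parent: "climb \<alpha> \<subseteq> parent"
  unfolding climb_def by blast

lemma climb_rtrancl_mcl: "(z, a) \<in> (climb \<alpha>)\<^sup>* \<Longrightarrow> z \<noteq> a \<Longrightarrow> mcl M c z \<noteq> \<alpha>"
  by (auto elim: converse_rtranclE simp: climb_def)

lemma single_valued_climb: "single_valued (climb \<alpha>)"
  unfolding single_valued_def climb_def parent_rel_def by auto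

lemma wf_converse_climb: "wf ((climb \<alpha>)\<inverse>)"
  using finite_subset[OF climb_parent finite_parent] acyclic_subset[OF acyclic_parent climb_parent]
  by (rule finite_acyclic_wf_converse)

lemma climb_top_terminal:
  "(the (par x), climb_top x) \<in> (climb (up_colour x))\<^sup>*"
  "climb_top x \<notin> Domain (climb (up_colour x))"
proof -
  let ?r = "climb (up_colour x)"
  have "\<exists>!a. (the (par x), a) \<in> ?r\<^sup>* \<and> a \<notin> Domain ?r"
    using wf_converse_ex_terminal[OF wf_converse_climb]
      single_valued_terminal_unique[OF single_valued_climb] by blast
  then have "(the (par x), climb_top x) \<in> ?r\<^sup>* \<and> climb_top x \<notin> Domain ?r"
    unfolding climb_top_def by (rule theI')
  then show "(the (par x), climb_top x) \<in> ?r\<^sup>*" "climb_top x \<notin> Domain ?r" by auto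
qed

lemma climb_top_above:
  assumes "x \<in> up_matched" shows "(x, climb_top x) \<in> parent\<^sup>+"
proof -
  obtain p where p: "par x = Some p" "(x, p) \<in> parent" using assms by (rule up_matchedE)
  have "(p, climb_top x) \<in> parent\<^sup>*"
    using climb_top_terminal(1)[of x] p(1) rtrancl_mono[OF climb_parent] by auto
  with p(2) show ?thesis by simp
qed

lemma climb_top_ne: "x \<in> up_matched \<Longrightarrow> climb_top x \<noteq> x"
  using climb_top_above acyclic_parent unfolding acyclic_def by fastforce

lemma climb_top_in_forest: "x \<in> up_matched \<Longrightarrow> climb_top x \<in> VF"
  using climb_top_above by (auto elim: tranclE dest: parentD)

lemma climb_top_child:
  assumes "x \<in> up_matched"
  obtains w where "(w, climb_top x) \<in> parent" "c {w, climb_top x} = up_colour x"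
proof -
  obtain p where p: "par x = Some p" "(x, p) \<in> parent" "c {x, p} = mcl M c x"
    using assms by (rule up_matchedE)
  have "(p, climb_top x) \<in> (climb (up_colour x))\<^sup>*" using climb_top_terminal(1)[of x] p(1) by simp
  then show ?thesis
  proof (cases rule: rtranclE)
    case base
    with p assms show ?thesis by (intro that[of x]) (auto simp: up_matched_def)
  next
    case (step w)
    then show ?thesis by (intro that[of w]) (auto simp: climb_def)
  qed
qed

lemma climb_top_up_matched:
  assumes x: "x \<in> up_matched" and stalled: "mcl M c (climb_top x) \<noteq> up_colour x"
  shows "climb_top x \<in> up_matched"
proof -
  let ?a = "climb_top x"
  obtain w where w: "(w, ?a) \<in> parent" "c {w, ?a} = up_colour x" using x by (rule climb_top_child)
  have a: "?a \<in> VF" "{w, ?a} \<in> forest_edges VF par"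
    using parentD[OF w(1)] parent_forest_edge[OF w(1)] by auto
  have "?a \<notin> roots VF par"
    using end_edge_colour[OF _ a(2), of ?a] w(2) stalled by auto
  then obtain q where q: "par ?a = Some q" using a(1) unfolding roots_def by auto
  then have aq: "(?a, q) \<in> parent" using a(1) unfolding parent_rel_def by simp
  have "c {?a, q} \<noteq> up_colour x"
    using climb_top_terminal(2)[of x] aq stalled unfolding climb_def by blast
  moreover have "c {?a, q} = c {w, ?a}" if "c {?a, q} \<noteq> mcl M c ?a"
  proof (rule non_matching_colours_eq)
    show "?a \<in> V" using a(1) forest_vertices by blast
    show "{?a, q} \<in> E" "{w, ?a} \<in> E"
      using parent_forest_edge[OF aq] a(2) forest_subgraph by blast+
  qed (use that w(2) stalled in auto)
  ultimately have "c {?a, q} = mcl M c ?a" using w(2) by auto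
  with a(1) q show ?thesis unfolding up_matched_def up_colour_def by simp
qed

lemma leaves_up_matched: "leaves VF par \<subseteq> up_matched"
proof
  fix l assume l: "l \<in> leaves VF par"
  then obtain p where p: "par l = Some p" "l \<in> VF" unfolding leaves_def by auto
  then have "{l, p} \<in> forest_edges VF par" unfolding forest_edges_def by auto
  with l have "c {l, p} = mcl M c l" by (intro end_edge_colour) auto
  with p show "l \<in> up_matched" unfolding up_matched_def up_colour_def by simp
qed

lemma leaf_not_climb_top:
  assumes "l \<in> leaves VF par" "x \<in> up_matched" shows "climb_top x \<noteq> l"
proof -
  obtain w where "(w, climb_top x) \<in> parent" using assms(2) by (rule climb_top_child)
  with assms(1) show ?thesis unfolding leaves_def parent_rel_def by auto
qed

lemma stalled_up_colour_eq:
  assumes "x \<in> stalled a" "y \<in> stalled a" shows "up_colour x = up_colour y"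
proof -
  from assms have x: "x \<in> up_matched" "climb_top x = a" "mcl M c a \<noteq> up_colour x"
    and y: "y \<in> up_matched" "climb_top y = a" "mcl M c a \<noteq> up_colour y"
    unfolding stalled_def by auto
  obtain w1 where w1: "(w1, a) \<in> parent" "c {w1, a} = up_colour x"
    using climb_top_child[OF x(1)] x(2) by metis
  obtain w2 where w2: "(w2, a) \<in> parent" "c {w2, a} = up_colour y"
    using climb_top_child[OF y(1)] y(2) by metis
  have "a \<in> V" using parentD[OF w1(1)] forest_vertices by auto
  then show ?thesis
    using non_matching_colours_eq[of a "{w1, a}" "{w2, a}"] forest_subgraph
      parent_forest_edge[OF w1(1)] parent_forest_edge[OF w2(1)] w1(2) w2(2) x(3) y(3) by auto
qed

lemma partner_stalled:
  assumes "x \<in> up_matched" "mcl M c (climb_top x) \<noteq> up_colour x"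
  shows "partner x \<in> stalled (climb_top x)" "dfs (partner x) \<le> dfs x"
proof -
  have x: "x \<in> stalled (climb_top x)" using assms unfolding stalled_def by simp
  have "stalled (climb_top x) \<subseteq> VF" unfolding stalled_def up_matched_def by auto
  with forest have "finite (stalled (climb_top x))"
    unfolding rooted_forest_def by (auto intro: finite_subset)
  with x assms(2) show "partner x \<in> stalled (climb_top x)" "dfs (partner x) \<le> dfs x"
    unfolding partner_def using arg_min_if_finite(1) arg_min_least[of _ x dfs] by auto
qed

lemma finite_starts: "finite starts"
proof -
  have "starts \<subseteq> VF" unfolding starts_def up_matched_def by auto
  with forest show ?thesis unfolding rooted_forest_def by (auto intro: finite_subset)
qed

lemma self_partner_stalls:
  "x \<in> up_matched \<Longrightarrow> partner x = x \<Longrightarrow> mcl M c (climb_top x) \<noteq> up_colour x"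
  using climb_top_ne unfolding partner_def by auto

lemma relayD:
  assumes "(x, y) \<in> relay"
  shows "x \<in> up_matched" "y \<in> up_matched" "(x, y) \<in> parent\<^sup>+"
proof -
  from assms have x: "x \<in> up_matched" "partner x = x" "y = climb_top x"
    unfolding relay_def by auto
  have "mcl M c (climb_top x) \<noteq> up_colour x" using self_partner_stalls[OF x(1,2)] .
  with x show "x \<in> up_matched" "y \<in> up_matched" "(x, y) \<in> parent\<^sup>+"
    using climb_top_up_matched climb_top_above by auto
qed

lemma relay_rtrancl_up_matched: "(x, y) \<in> relay\<^sup>* \<Longrightarrow> x \<in> up_matched \<Longrightarrow> y \<in> up_matched"
  by (induction rule: rtrancl_induct) (auto dest: relayD)

lemma single_valued_converse_relay: "single_valued (relay\<inverse>)"
proof (rule single_valuedI)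
  have "x = arg_min_on dfs (stalled z)" if "(x, z) \<in> relay" for x z
  proof -
    from that have x: "x \<in> up_matched" "partner x = x" "z = climb_top x"
      unfolding relay_def by auto
    with self_partner_stalls[OF x(1,2)] show ?thesis unfolding partner_def by auto
  qed
  then show "\<And>z x y. (z, x) \<in> relay\<inverse> \<Longrightarrow> (z, y) \<in> relay\<inverse> \<Longrightarrow> x = y" by auto
qed

lemma wf_converse_relay: "wf (relay\<inverse>)"
proof (rule finite_acyclic_wf_converse)
  have sub: "relay \<subseteq> parent\<^sup>+" using relayD by auto
  then show "finite relay" using finite_parent by (auto intro: finite_subset)
  have "acyclic (parent\<^sup>+)" using acyclic_parent unfolding acyclic_def by simp
  then show "acyclic relay" using sub by (rule acyclic_subset)
qed

lemma card_leaves_le_starts: "card (leaves VF par) \<le> card starts"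
proof -
  define relay_end where "relay_end l = (SOME u. (l, u) \<in> relay\<^sup>* \<and> u \<notin> Domain relay)" for l
  have end_props: "(l, relay_end l) \<in> relay\<^sup>*" "relay_end l \<notin> Domain relay" for l
    using someI_ex[OF wf_converse_ex_terminal[OF wf_converse_relay, of l]]
    unfolding relay_end_def by auto
  have "relay_end l \<in> starts" if "l \<in> leaves VF par" for l
  proof -
    have "relay_end l \<in> up_matched"
      using relay_rtrancl_up_matched[OF end_props(1)] leaves_up_matched that by blast
    with end_props(2)[of l] show ?thesis unfolding starts_def relay_def by blast
  qed
  moreover have "inj_on relay_end (leaves VF par)"
  proof (rule inj_onI)
    fix l1 l2 assume l: "l1 \<in> leaves VF par" "l2 \<in> leaves VF par" "relay_end l1 = relay_end l2"
    have no_relay_in: "l \<notin> Domain (relay\<inverse>)" if "l \<in> leaves VF par" for l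
      using that leaf_not_climb_top unfolding relay_def by auto
    show "l1 = l2"
      using single_valued_terminal_unique[OF single_valued_converse_relay, of "relay_end l1" l1 l2]
        end_props(1)[of l1] end_props(1)[of l2] l no_relay_in
      by (simp add: rtrancl_converse)
  qed
  ultimately show ?thesis using finite_starts by (meson card_inj_on_le image_subsetI)
qed

lemma climb_path:
  assumes "y \<in> up_matched"
  obtains ys where "ys \<noteq> []" "hd ys = y" "last ys = climb_top y" "distinct ys"
    "path_edges ys \<subseteq> {e \<in> forest_edges VF par. c e = up_colour y}"
    "\<forall>z\<in>set ys - {y}. (z, climb_top y) \<in> (climb (up_colour y))\<^sup>*"
proof -
  let ?\<alpha> = "up_colour y"
  obtain p where p: "par y = Some p" "(y, p) \<in> parent" "c {y, p} = mcl M c y"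
    using assms by (rule up_matchedE)
  have "(p, climb_top y) \<in> (climb ?\<alpha>)\<^sup>*" using climb_top_terminal(1)[of y] p(1) by simp
  from rtrancl_imp_successively[OF this]
  obtain ps where ps: "ps \<noteq> []" "hd ps = p" "last ps = climb_top y"
      "successively (\<lambda>a b. (a, b) \<in> climb ?\<alpha>) ps" "\<forall>z\<in>set ps. (z, climb_top y) \<in> (climb ?\<alpha>)\<^sup>*"
    by blast
  have "successively (\<lambda>a b. (a, b) \<in> parent \<and> c {a, b} = ?\<alpha>) ps"
    using ps(4) by (rule successively_mono) (simp add: climb_def)
  with ps(1,2) p assms have up: "successively (\<lambda>a b. (a, b) \<in> parent \<and> c {a, b} = ?\<alpha>) (y # ps)"
    by (simp add: successively_Cons up_matched_def)
  have "successively (\<lambda>a b. (a, b) \<in> parent) (y # ps)"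
    using up by (rule successively_mono) simp
  then have "distinct (y # ps)" using acyclic_parent by (rule distinct_if_successively_acyclic)
  moreover have "path_edges (y # ps) \<subseteq> {e \<in> forest_edges VF par. c e = ?\<alpha>}"
    unfolding path_edges_subset_iff using up by (rule successively_mono) (simp add: parent_forest_edge)
  moreover have "\<forall>z\<in>set (y # ps) - {y}. (z, climb_top y) \<in> (climb ?\<alpha>)\<^sup>*"
    using ps(5) by auto
  ultimately show ?thesis using ps(1,3) by (intro that[of "y # ps"]) simp_all
qed

lemma partner_climb_path:
  assumes "x \<in> up_matched"
  obtains ys where "ys \<noteq> []" "hd ys = partner x" "last ys = climb_top x" "distinct ys"
    "path_edges ys \<subseteq> {e \<in> forest_edges VF par. c e = up_colour x}"
    "\<forall>z\<in>set ys - {partner x}. (z, climb_top x) \<in> (climb (up_colour x))\<^sup>*"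
proof (cases "mcl M c (climb_top x) = up_colour x")
  case True
  then have "partner x = climb_top x" unfolding partner_def by simp
  then show ?thesis by (intro that[of "[climb_top x]"]) (auto simp: path_edges_def)
next
  case False
  have v: "partner x \<in> stalled (climb_top x)" using partner_stalled(1)[OF assms False] .
  moreover have "x \<in> stalled (climb_top x)" using assms False unfolding stalled_def by simp
  ultimately have colour: "up_colour (partner x) = up_colour x" by (rule stalled_up_colour_eq)
  have up: "partner x \<in> up_matched" and top: "climb_top (partner x) = climb_top x"
    using v unfolding stalled_def by auto
  show ?thesis by (rule climb_path[OF up, unfolded top colour], rule that)
qed

definition partner_path :: "'a \<Rightarrow> 'a list \<Rightarrow> bool" where
  "partner_path x xs \<longleftrightarrow> forest_path VF par xs x (partner x) \<and>
     path_edges xs \<subseteq> {e. c e = up_colour x} \<and>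
     (\<forall>z\<in>path_internal xs. mcl M c z \<noteq> up_colour x \<and> (z, climb_top x) \<in> (climb (up_colour x))\<^sup>*)"

lemma ex_partner_path:
  assumes "x \<in> starts" shows "\<exists>xs. partner_path x xs"
proof -
  let ?a = "climb_top x" and ?\<alpha> = "up_colour x"
  let ?S = "{e \<in> forest_edges VF par. c e = ?\<alpha>}"
  have x: "x \<in> up_matched" "partner x \<noteq> x" using assms unfolding starts_def by auto
  obtain xs where xs: "xs \<noteq> []" "hd xs = x" "last xs = ?a" "distinct xs" "path_edges xs \<subseteq> ?S"
      "\<forall>z\<in>set xs - {x}. (z, ?a) \<in> (climb ?\<alpha>)\<^sup>*"
    using x(1) by (rule climb_path)
  obtain ys where ys: "ys \<noteq> []" "hd ys = partner x" "last ys = ?a" "distinct ys" "path_edges ys \<subseteq> ?S"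
      "\<forall>z\<in>set ys - {partner x}. (z, ?a) \<in> (climb ?\<alpha>)\<^sup>*"
    using x(1) by (rule partner_climb_path)
  obtain zs where zs: "zs \<noteq> []" "hd zs = x" "last zs = partner x" "distinct zs"
      "successively (\<lambda>a b. {a, b} \<in> ?S) zs" "set zs \<subseteq> set xs \<union> set ys"
    using successively_join_at_last[of xs "\<lambda>a b. {a, b} \<in> ?S" ys] xs ys
    unfolding path_edges_subset_iff by (auto simp: insert_commute)
  have "forest_path VF par zs x (partner x)" "path_edges zs \<subseteq> {e. c e = ?\<alpha>}"
    using zs unfolding forest_path_iff path_edges_subset_iff[symmetric] by auto
  moreover have "mcl M c z \<noteq> ?\<alpha> \<and> (z, ?a) \<in> (climb ?\<alpha>)\<^sup>*" if "z \<in> path_internal zs" for z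
  proof -
    from that zs(2,3,6) have "z \<in> (set xs - {x}) \<union> (set ys - {partner x})" "z \<noteq> partner x"
      unfolding path_internal_def by auto
    then have "(z, ?a) \<in> (climb ?\<alpha>)\<^sup>*" "z \<noteq> partner x" using xs(6) ys(6) by auto
    moreover have "mcl M c ?a \<noteq> ?\<alpha>" if "?a \<noteq> partner x"
      using that unfolding partner_def by auto
    ultimately show ?thesis using climb_rtrancl_mcl by blast
  qed
  ultimately show ?thesis unfolding partner_path_def by blast
qed

lemma partner_forest_less:
  assumes "x \<in> starts" shows "forest_less VF par dfs x (partner x)"
proof -
  let ?a = "climb_top x"
  have x: "x \<in> up_matched" "partner x \<noteq> x" using assms unfolding starts_def by auto
  have xVF: "x \<in> VF" using x(1) unfolding up_matched_def by simp
  have aVF: "?a \<in> VF" using x(1) by (rule climb_top_in_forest)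
  have anc_x: "anc VF par ?a x"
    using climb_top_above[OF x(1)] unfolding anc_def by simp
  show ?thesis
  proof (cases "mcl M c ?a = up_colour x")
    case True
    then have v: "partner x = ?a" unfolding partner_def by simp
    have "dfs ?a < dfs x"
      using dfs_order aVF xVF anc_x climb_top_ne[OF x(1)] unfolding dfs_indexing_def by blast
    moreover have "same_tree VF par x ?a"
      using aVF anc_x unfolding same_tree_def anc_def by blast
    ultimately show ?thesis
      using v xVF aVF x(2) unfolding forest_less_def forest_le_def by simp
  next
    case False
    let ?v = "partner x"
    have v: "?v \<in> stalled ?a" "dfs ?v \<le> dfs x" using partner_stalled[OF x(1) False] by auto
    then have "?v \<in> up_matched" "climb_top ?v = ?a" unfolding stalled_def by auto
    then have "?v \<in> VF" "anc VF par ?a ?v"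
      using climb_top_above[of ?v] unfolding up_matched_def anc_def by auto
    moreover have "same_tree VF par x ?v"
      using aVF anc_x \<open>anc VF par ?a ?v\<close> unfolding same_tree_def by blast
    ultimately show ?thesis
      using v(2) xVF x(2) unfolding forest_less_def forest_le_def by simp
  qed
qed

lemma mcl_partner:
  assumes "x \<in> starts" shows "mcl M c (partner x) = mcl M c x"
proof -
  have x: "x \<in> up_matched" using assms unfolding starts_def by simp
  show ?thesis
  proof (cases "mcl M c (climb_top x) = up_colour x")
    case True
    with x show ?thesis unfolding partner_def up_matched_def by simp
  next
    case False
    have v: "partner x \<in> stalled (climb_top x)" using partner_stalled(1)[OF x False] .
    moreover have "x \<in> stalled (climb_top x)" using x False unfolding stalled_def by simp
    ultimately have "up_colour (partner x) = up_colour x" by (rule stalled_up_colour_eq)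
    with v x show ?thesis unfolding stalled_def up_matched_def by simp
  qed
qed

lemma partner_pathD:
  assumes "x \<in> starts" "partner_path x xs"
  shows "forest_path VF par xs x (partner x)" "\<forall>e\<in>path_edges xs. c e = mcl M c x"
    "\<forall>z\<in>path_internal xs. mcl M c z \<noteq> mcl M c x"
  using assms unfolding partner_path_def starts_def up_matched_def by auto

lemma partner_paths_disjoint:
  assumes starts: "x \<in> starts" "y \<in> starts"
    and paths: "partner_path x xs" "partner_path y ys" and "x \<noteq> y"
    and matched: "{x, partner x} \<in> M" "{y, partner y} \<in> M"
  shows "path_internal xs \<inter> path_internal ys = {}"
proof (rule ccontr)
  assume "path_internal xs \<inter> path_internal ys \<noteq> {}"
  then obtain z where z: "z \<in> path_internal xs" "z \<in> path_internal ys" by blast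
  obtain e1 where e1: "e1 \<in> path_edges xs" "z \<in> e1" using z(1) by (rule path_internal_in_path_edge)
  obtain e2 where e2: "e2 \<in> path_edges ys" "z \<in> e2" using z(2) by (rule path_internal_in_path_edge)
  have e1F: "e1 \<in> forest_edges VF par" "c e1 = up_colour x"
    and e2F: "e2 \<in> forest_edges VF par" "c e2 = up_colour y"
    using paths e1(1) e2(1) unfolding partner_path_def forest_path_iff by auto
  have zx: "mcl M c z \<noteq> up_colour x" "(z, climb_top x) \<in> (climb (up_colour x))\<^sup>*"
    and zy: "mcl M c z \<noteq> up_colour y" "(z, climb_top y) \<in> (climb (up_colour y))\<^sup>*"
    using paths z unfolding partner_path_def by auto
  have colour: "up_colour x = up_colour y"
  proof -
    have "c e1 = c e2"
    proof (rule non_matching_colours_eq)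
      show "z \<in> V" using e1F(1) e1(2) by (rule forest_edge_vertex)
      show "e1 \<in> E" "e2 \<in> E" using e1F(1) e2F(1) forest_subgraph by blast+
    qed (use e1(2) e2(2) e1F(2) e2F(2) zx(1) zy(1) in auto)
    with e1F(2) e2F(2) show ?thesis by simp
  qed
  have "climb_top x = climb_top y"
    using single_valued_terminal_unique[OF single_valued_climb zx(2)] zy(2)
      climb_top_terminal(2)[of x] climb_top_terminal(2)[of y] colour by simp
  with colour have "partner x = partner y" unfolding partner_def by simp
  moreover have "partner x \<in> V"
    using partner_forest_less[OF starts(1)] forest_vertices
    unfolding forest_less_def forest_le_def by auto
  ultimately show False
    using matching_mate_unique[of "partner x" x y] matched \<open>x \<noteq> y\<close> by simp
qed

end

theorem lemma3:
  fixes V :: "'a set" and E M :: "'a set set" and c :: "'a set \<Rightarrow> nat"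
    and VF :: "'a set" and par :: "'a \<Rightarrow> 'a option" and dfs :: "'a \<Rightarrow> nat"
  assumes G: "simple_graph V E"
    and PM: "perfect_matching V E M"
    and C: "optimal_edge_2_colouring V E c"
    and F: "rooted_forest VF par"
    and F_sub: "VF \<subseteq> V" "forest_edges VF par \<subseteq> E - M"
    and D: "dfs_indexing VF par dfs"
    and RL: "\<forall>u \<in> roots VF par \<union> leaves VF par. \<forall>e \<in> forest_edges VF par.
               u \<in> e \<longrightarrow> c e = mcl M c u"
  shows "\<exists>(u :: nat \<Rightarrow> 'a) (v :: nat \<Rightarrow> 'a) (p :: nat \<Rightarrow> 'a list).
     let n = card (leaves VF par) in
       (\<forall>i<n. \<forall>j<n. i \<noteq> j \<longrightarrow> u i \<noteq> u j) \<and>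
       (\<forall>i<n. forest_less VF par dfs (u i) (v i) \<and> forest_path VF par (p i) (u i) (v i)) \<and>
       (\<forall>i<n. mcl M c (u i) = mcl M c (v i)) \<and>
       (\<forall>i<n. \<forall>e \<in> path_edges (p i). c e = mcl M c (u i)) \<and>
       (\<forall>i<n. \<forall>z \<in> path_internal (p i). mcl M c z \<noteq> mcl M c (u i)) \<and>
       (\<forall>i<n. \<forall>j<n. i \<noteq> j \<and> {u i, v i} \<in> M \<and> {u j, v j} \<in> M \<longrightarrow>
            path_internal (p i) \<inter> path_internal (p j) = {})"
proof -
  interpret coloured_forest V E M c VF par dfs
    by unfold_locales
      (use G PM C F F_sub D RL in \<open>auto simp: optimal_edge_2_colouring_def\<close>)
  define n where "n = card (leaves VF par)"
  obtain g where g: "g ` {..<n} \<subseteq> starts" "inj_on g {..<n}"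
    using card_le_inj[OF _ finite_starts, of "{..<n}"] card_leaves_le_starts unfolding n_def by auto
  then have starts_g: "g i \<in> starts" if "i < n" for i using that by auto
  have distinct_g: "g i \<noteq> g j" if "i < n" "j < n" "i \<noteq> j" for i j
    using g(2) that by (auto dest: inj_onD)
  obtain path where path: "\<And>x. x \<in> starts \<Longrightarrow> partner_path x (path x)"
    using ex_partner_path by metis
  show ?thesis
    unfolding n_def[symmetric] Let_def
    by (rule exI[of _ g], rule exI[of _ "\<lambda>i. partner (g i)"], rule exI[of _ "\<lambda>i. path (g i)"])
      (use distinct_g partner_forest_less[OF starts_g] mcl_partner[OF starts_g]
        partner_pathD[OF starts_g path[OF starts_g]]
        partner_paths_disjoint[OF starts_g starts_g path[OF starts_g] path[OF starts_g] distinct_g]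
        in auto)
qed

end
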